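(* Assume $u_i=1$ for all $i$, $q_1\ge\dots\ge q_n$, and no pool size bound ($G=n$). Suppose var-Greedy returns a regime whose tests together consist exactly of individuals $\{1,\dots,n'\}$. Then there exists a non-overlapping regime maximizing welfare over $\tilde{\mathcal T}^B$ whose tests together consist exactly of individuals $\{1,\dots,n''\}$ for some $n''\le n'$.
   Context: Individual $i\in[n]$ is healthy with probability $q_i\in[0,1]$, independently. For $S\subseteq[n]$, $q_S=\prod_{i\in S}q_i$ ($q_\emptyset=1$). A test is a set $t\subseteq[n]$; with unit utilities $u(t)=q_t|t|$. $\tilde{\mathcal T}^B$ is the set of tuples of $B$ pairwise disjoint tests, with welfare $u(T)=\sum_ju(t_j)$. var-Greedy: for $j=1,\dots,B$, start with $t_j=\emptyset$ and repeatedly consider the smallest-index individual $i$ not yet placed in any test; add $i$ to $t_j$ if $u(t_j\cup\{i\})\ge u(t_j)$ (equivalently $q_i\ge |t_j|/(|t_j|+1)$), otherwise close $t_j$ and move to test $j+1$ (also stop if no individuals remain). *)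

theory Defs
  imports Complex_Main
begin

text \<open>Individuals are 1..n; q i is the probability that individual i is healthy.
  Unit utilities: u(t) = q_t * |t| with q_t the product over t (empty product 1).\<close>

definition test_util :: "(nat \<Rightarrow> real) \<Rightarrow> nat set \<Rightarrow> real" where
  "test_util q t = (\<Prod>i\<in>t. q i) * real (card t)"

text \<open>Non-overlapping regimes of B tests over individuals 1..n (tests indexed j < B;
  unused indices are fixed to the empty set to make the representation canonical).\<close>

definition regime :: "nat \<Rightarrow> nat \<Rightarrow> (nat \<Rightarrow> nat set) \<Rightarrow> bool" where
  "regime n B T \<longleftrightarrow> (\<forall>j<B. T j \<subseteq> {1..n}) \<and> (\<forall>j\<ge>B. T j = {})
     \<and> (\<forall>j<B. \<forall>k<B. j \<noteq> k \<longrightarrow> T j \<inter> T k = {})"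

definition welfare :: "(nat \<Rightarrow> real) \<Rightarrow> nat \<Rightarrow> (nat \<Rightarrow> nat set) \<Rightarrow> real" where
  "welfare q B T = (\<Sum>j<B. test_util q (T j))"

function grow :: "(nat \<Rightarrow> real) \<Rightarrow> nat \<Rightarrow> nat \<Rightarrow> nat set \<Rightarrow> nat set \<times> nat" where
  "grow q n i t =
     (if i \<le> n \<and> test_util q (insert i t) \<ge> test_util q t
      then grow q n (Suc i) (insert i t) else (t, i))"
  by pat_completeness auto
termination by (relation "measure (\<lambda>(q, n, i, t). Suc n - i)") auto

fun greedy_list :: "(nat \<Rightarrow> real) \<Rightarrow> nat \<Rightarrow> nat \<Rightarrow> nat \<Rightarrow> nat set list" where
  "greedy_list q n i 0 = []"
| "greedy_list q n i (Suc b) = (let (t, i') = grow q n i {} in t # greedy_list q n i' b)"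

definition var_greedy :: "(nat \<Rightarrow> real) \<Rightarrow> nat \<Rightarrow> nat \<Rightarrow> (nat \<Rightarrow> nat set)" where
  "var_greedy q n B = (\<lambda>j. if j < B then greedy_list q n 1 B ! j else {})"

end

theory Submission
  imports Defs
begin

(* An optimal regime that, among all optimal regimes, minimises the sum of the individuals it
   tests has two properties: every member x of a test t satisfies q_x |t| > |t| - 1 (otherwise
   dropping x does not lower welfare), and the tested individuals form an initial segment
   {1..m} (otherwise exchanging a tested individual for a smaller untested one, who is at
   least as healthy, does not lower welfare). Greedy cuts {1..n'} into consecutive blocks
   [p_l, p_{l+1}), each closed because q_{p_{l+1}} (s + 1) < s with s = p_{l+1} - p_l, and as
   q is decreasing the same inequality holds for every later individual. By
   induction on l, at most l tests with the first property cover at most p_l - 1 individuals: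
   if the smallest one has at most s members it is charged to the block, and otherwise all of
   them are larger than s, which forces their members below p_{l+1}. *)

subsection \<open>Utility of a single test\<close>

lemma test_util_insert:
  assumes "finite t" "x \<notin> t"
  shows "test_util q (insert x t) = q x * (\<Prod>i\<in>t. q i) * (real (card t) + 1)"
  using assms by (simp add: test_util_def)

lemma test_util_insert_less_imp:
  assumes "finite t" "x \<notin> t" "0 \<le> (\<Prod>i\<in>t. q i)"
    and "test_util q (insert x t) < test_util q t"
  shows "q x * (real (card t) + 1) < real (card t)"
proof -
  have "(\<Prod>i\<in>t. q i) * (q x * (real (card t) + 1)) < (\<Prod>i\<in>t. q i) * real (card t)"
    using assms(4) unfolding test_util_insert[OF assms(1,2)] by (simp add: test_util_def algebra_simps)
  then show ?thesis
    using assms(3) by (simp add: mult_less_cancel_left)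
qed

lemma test_util_remove_ge:
  assumes "finite t" "x \<in> t" "0 \<le> (\<Prod>i\<in>t - {x}. q i)"
    and "q x * real (card t) \<le> real (card t) - 1"
  shows "test_util q t \<le> test_util q (t - {x})"
proof -
  have card_t: "card t = card (t - {x}) + 1"
    using card_Suc_Diff1[OF assms(1,2)] by simp
  have "test_util q t = q x * (\<Prod>i\<in>t - {x}. q i) * (real (card (t - {x})) + 1)"
    using test_util_insert[of "t - {x}" x q] assms(1) insert_Diff[OF assms(2)] by simp
  also have "\<dots> \<le> (\<Prod>i\<in>t - {x}. q i) * real (card (t - {x}))"
    using mult_left_mono[OF assms(4) assms(3)] card_t by (simp add: algebra_simps)
  finally show ?thesis
    by (simp add: test_util_def mult.commute)
qed

lemma test_util_exchange_le:
  assumes "finite t" "x \<notin> t" "y \<notin> t" "0 \<le> (\<Prod>i\<in>t. q i)" "q y \<le> q x"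
  shows "test_util q (insert y t) \<le> test_util q (insert x t)"
  using assms by (simp add: test_util_insert mult_right_mono)

subsection \<open>The blocks of var-Greedy\<close>

declare grow.simps[simp del]

lemma grow_eq_interval:
  assumes "grow q n i t = (t', e)"
  shows "t' = t \<union> {i..<e} \<and> i \<le> e \<and> (e \<le> n \<longrightarrow> test_util q (insert e t') < test_util q t')"
  using assms
proof (induction q n i t arbitrary: t' e rule: grow.induct)
  case (1 q n i t)
  show ?case
  proof (cases "i \<le> n \<and> test_util q (insert i t) \<ge> test_util q t")
    case True
    then have "grow q n (Suc i) (insert i t) = (t', e)"
      using "1.prems" by (subst (asm) grow.simps) simp
    with "1.IH"[OF True] show ?thesis by auto
  next
    case False
    then have "t' = t" "e = i"
      using "1.prems" by (subst (asm) grow.simps; simp)+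
    with False show ?thesis by auto
  qed
qed

fun greedy_start :: "(nat \<Rightarrow> real) \<Rightarrow> nat \<Rightarrow> nat \<Rightarrow> nat" where
  "greedy_start q n 0 = 1"
| "greedy_start q n (Suc l) = snd (grow q n (greedy_start q n l) {})"

lemma grow_greedy_start:
  "grow q n (greedy_start q n l) {}
     = ({greedy_start q n l..<greedy_start q n (Suc l)}, greedy_start q n (Suc l))"
  using grow_eq_interval[of q n "greedy_start q n l" "{}"]
  by (cases "grow q n (greedy_start q n l) {}") auto

declare greedy_start.simps(2)[simp del]

lemma greedy_start_le_Suc: "greedy_start q n l \<le> greedy_start q n (Suc l)"
  using grow_eq_interval[OF grow_greedy_start] by blast

lemma greedy_start_ge_1: "1 \<le> greedy_start q n l"
  using lift_Suc_mono_le[of "greedy_start q n", OF greedy_start_le_Suc, of 0 l] by simp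

lemma greedy_start_closes_block:
  "greedy_start q n (Suc l) \<le> n \<Longrightarrow>
   test_util q (insert (greedy_start q n (Suc l)) {greedy_start q n l..<greedy_start q n (Suc l)})
     < test_util q {greedy_start q n l..<greedy_start q n (Suc l)}"
  using grow_eq_interval[OF grow_greedy_start] by blast

lemma greedy_list_nth:
  "j < b \<Longrightarrow> greedy_list q n (greedy_start q n l) b ! j
     = {greedy_start q n (l + j)..<greedy_start q n (Suc (l + j))}"
proof (induction b arbitrary: l j)
  case 0
  then show ?case by simp
next
  case (Suc b)
  then show ?case
    using Suc.IH[of _ "Suc l"] by (cases j) (simp_all add: grow_greedy_start)
qed

lemma var_greedy_eq:
  "j < B \<Longrightarrow> var_greedy q n B j = {greedy_start q n j..<greedy_start q n (Suc j)}"
  using greedy_list_nth[of j B q n 0] by (simp add: var_greedy_def)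

lemma UN_atLeastLessThan_consecutive:
  fixes p :: "nat \<Rightarrow> nat"
  assumes "\<And>l. p l \<le> p (Suc l)"
  shows "(\<Union>j<B. {p j..<p (Suc j)}) = {p 0..<p B}"
proof (induction B)
  case 0
  then show ?case by simp
next
  case (Suc B)
  have "p 0 \<le> p B"
    using lift_Suc_mono_le[of p, OF assms] by simp
  then show ?case
    using Suc.IH ivl_disj_un_two(3)[OF _ assms[of B]] by (simp add: lessThan_Suc Un_commute)
qed

lemma UN_var_greedy: "(\<Union>j<B. var_greedy q n B j) = {1..<greedy_start q n B}"
  using UN_atLeastLessThan_consecutive[of "greedy_start q n" B, OF greedy_start_le_Suc]
  by (simp add: var_greedy_eq)

lemma greedy_start_rejects:
  assumes q_nonneg: "\<And>i. i \<in> {1..n} \<Longrightarrow> 0 \<le> q i"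
    and q_antitone: "\<And>i j. i \<in> {1..n} \<Longrightarrow> j \<in> {1..n} \<Longrightarrow> i \<le> j \<Longrightarrow> q j \<le> q i"
    and "x \<in> {1..n}" "greedy_start q n (Suc l) \<le> x"
  defines "s \<equiv> greedy_start q n (Suc l) - greedy_start q n l"
  shows "q x * (real s + 1) < real s"
proof -
  let ?a = "greedy_start q n l" and ?b = "greedy_start q n (Suc l)"
  have "?b \<in> {1..n}"
    using greedy_start_ge_1[of q n "Suc l"] assms(3,4) by simp
  have "0 \<le> (\<Prod>i\<in>{?a..<?b}. q i)"
    using q_nonneg greedy_start_ge_1[of q n l] \<open>?b \<in> {1..n}\<close> by (intro prod_nonneg) auto
  then have "q ?b * (real (card {?a..<?b}) + 1) < real (card {?a..<?b})"
    using greedy_start_closes_block[of q n l] \<open>?b \<in> {1..n}\<close>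
    by (intro test_util_insert_less_imp) auto
  then have "q ?b * (real s + 1) < real s"
    by (simp add: s_def)
  moreover have "q x * (real s + 1) \<le> q ?b * (real s + 1)"
    using q_antitone[OF \<open>?b \<in> {1..n}\<close> assms(3,4)] by (simp add: mult_right_mono)
  ultimately show ?thesis by linarith
qed

subsection \<open>Tight tests\<close>

(* For q_{t - x} > 0 this says exactly that removing x from t strictly lowers its utility. *)
definition tight_test :: "(nat \<Rightarrow> real) \<Rightarrow> nat set \<Rightarrow> bool" where
  "tight_test q t \<longleftrightarrow> (\<forall>x\<in>t. real (card t) - 1 < q x * real (card t))"

lemma tight_test_card_le:
  assumes "tight_test q t" "x \<in> t" "q x * (real s + 1) < real s"
  shows "card t \<le> s"
proof (rule ccontr)
  assume "\<not> card t \<le> s"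
  then have k: "real s + 1 \<le> real (card t)" by simp
  have "real (card t) - 1 < q x * real (card t)"
    using assms(1,2) by (simp add: tight_test_def)
  moreover have "q x < 1"
  proof (rule ccontr)
    assume "\<not> q x < 1"
    then have "real s + 1 \<le> q x * (real s + 1)"
      using mult_right_mono[of 1 "q x" "real s + 1"] by simp
    with assms(3) show False by simp
  qed
  then have "(1 - q x) * (real s + 1) \<le> (1 - q x) * real (card t)"
    using k by (intro mult_left_mono) auto
  ultimately show False
    using assms(3) by (simp add: algebra_simps)
qed

lemma sum_card_tight_tests_le:
  fixes p :: "nat \<Rightarrow> nat"
  assumes "p 0 = 1"
    and p_mono: "\<And>l. p l \<le> p (Suc l)"
    and rejects: "\<And>l x. l < L \<Longrightarrow> x \<in> {1..n} \<Longrightarrow> p (Suc l) \<le> x \<Longrightarrow>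
           q x * (real (p (Suc l) - p l) + 1) < real (p (Suc l) - p l)"
    and "finite J" "card J \<le> L"
    and sub: "\<forall>j\<in>J. T j \<subseteq> {1..n}"
    and disj: "\<forall>j\<in>J. \<forall>k\<in>J. j \<noteq> k \<longrightarrow> T j \<inter> T k = {}"
    and tight: "\<forall>j\<in>J. tight_test q (T j)"
  shows "(\<Sum>j\<in>J. card (T j)) \<le> p L - 1"
  using assms
proof (induction L arbitrary: J)
  case 0
  then show ?case by simp
next
  case (Suc L)
  define s where "s = p (Suc L) - p L"
  have "1 \<le> p L"
    using Suc.prems(1) lift_Suc_mono_le[of p 0 L] Suc.prems(2) by simp
  show ?case
  proof (cases "J = {}")
    case True
    then show ?thesis by simp
  next
    case False
    then obtain j0 where j0: "j0 \<in> J" "\<And>j. j \<in> J \<Longrightarrow> card (T j0) \<le> card (T j)"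
      using ex_has_least_nat[of "\<lambda>j. j \<in> J" _ "\<lambda>j. card (T j)"] by blast
    show ?thesis
    proof (cases "card (T j0) \<le> s")
      case True
      have "(\<Sum>j\<in>J - {j0}. card (T j)) \<le> p L - 1"
        by (rule Suc.IH) (use Suc.prems j0(1) in \<open>auto simp: card_Diff_singleton\<close>)
      then show ?thesis
        using True \<open>1 \<le> p L\<close> Suc.prems(2)[of L] sum.remove[OF Suc.prems(4) j0(1), of "\<lambda>j. card (T j)"]
        unfolding s_def by linarith
    next
      case False
      have "(\<Union>j\<in>J. T j) \<subseteq> {1..<p (Suc L)}"
      proof
        fix x assume "x \<in> (\<Union>j\<in>J. T j)"
        then obtain j where j: "j \<in> J" "x \<in> T j" by blast
        have "x \<in> {1..n}" using j Suc.prems(6) by blast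
        moreover have "\<not> p (Suc L) \<le> x"
        proof
          assume "p (Suc L) \<le> x"
          then have "q x * (real s + 1) < real s"
            using Suc.prems(3)[of L x] \<open>x \<in> {1..n}\<close> by (simp add: s_def)
          then have "card (T j) \<le> s"
            using tight_test_card_le Suc.prems(8) j by blast
          then show False
            using False j0(2)[OF j(1)] by simp
        qed
        ultimately show "x \<in> {1..<p (Suc L)}" by simp
      qed
      then have "card (\<Union>j\<in>J. T j) \<le> p (Suc L) - 1"
        using card_mono[of "{1..<p (Suc L)}"] by fastforce
      moreover have "card (\<Union>j\<in>J. T j) = (\<Sum>j\<in>J. card (T j))"
        using Suc.prems(4,6,7) by (intro card_UN_disjoint) (auto intro: finite_subset)
      ultimately show ?thesis by simp
    qed
  qed
qed

subsection \<open>Optimal regimes\<close>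

definition optimal_regime :: "(nat \<Rightarrow> real) \<Rightarrow> nat \<Rightarrow> nat \<Rightarrow> (nat \<Rightarrow> nat set) \<Rightarrow> bool" where
  "optimal_regime q n B T \<longleftrightarrow>
     regime n B T \<and> (\<forall>T'. regime n B T' \<longrightarrow> welfare q B T' \<le> welfare q B T)"

lemma finite_regimes: "finite {T. regime n B T}"
proof -
  let ?f = "\<lambda>T. map T [0..<B]"
  have "inj_on ?f {T. regime n B T}"
  proof (rule inj_onI, rule ext)
    fix T T' j assume "T \<in> {T. regime n B T}" "T' \<in> {T. regime n B T}" "?f T = ?f T'"
    then show "T j = T' j"
      by (cases "j < B") (auto simp: regime_def map_eq_conv)
  qed
  moreover have "?f ` {T. regime n B T} \<subseteq> {xs. set xs \<subseteq> Pow {1..n} \<and> length xs = B}"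
    unfolding regime_def by fastforce
  then have "finite (?f ` {T. regime n B T})"
    by (rule finite_subset) (simp add: finite_lists_length_eq)
  ultimately show ?thesis
    by (rule finite_imageD[rotated])
qed

lemma optimal_regime_exists: "\<exists>T. optimal_regime q n B T"
proof -
  let ?W = "welfare q B ` {T. regime n B T}"
  have "(\<lambda>_. {}) \<in> {T. regime n B T}"
    by (simp add: regime_def)
  then have "finite ?W" "?W \<noteq> {}"
    using finite_regimes by auto
  then have "Max ?W \<in> ?W"
    by (rule Max_in)
  then obtain T where T: "regime n B T" "welfare q B T = Max ?W"
    by auto
  have "welfare q B T' \<le> welfare q B T" if "regime n B T'" for T'
    using that T(2) \<open>finite ?W\<close> by simp
  with T(1) show ?thesis
    unfolding optimal_regime_def by blast
qed

lemma regime_fun_upd: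
  assumes "regime n B T" "j < B" "A \<subseteq> {1..n}" "\<forall>i<B. i \<noteq> j \<longrightarrow> A \<inter> T i = {}"
  shows "regime n B (T(j := A))"
  using assms unfolding regime_def by (auto simp: Int_commute)

lemma welfare_fun_upd:
  assumes "j < B"
  shows "welfare q B (T(j := A)) = welfare q B T - test_util q (T j) + test_util q A"
proof -
  have "welfare q B T' = test_util q (T' j) + (\<Sum>i\<in>{..<B} - {j}. test_util q (T' i))" for T'
    using assms by (simp add: welfare_def sum.remove)
  moreover have "(\<Sum>i\<in>{..<B} - {j}. test_util q ((T(j := A)) i))
      = (\<Sum>i\<in>{..<B} - {j}. test_util q (T i))"
    by (rule sum.cong) auto
  ultimately show ?thesis
    by simp
qed

lemma optimal_regime_fun_upd:
  assumes opt: "optimal_regime q n B T" and "j < B" "A \<subseteq> {1..n}"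
    and "\<forall>i<B. i \<noteq> j \<longrightarrow> A \<inter> T i = {}" "test_util q (T j) \<le> test_util q A"
  shows "optimal_regime q n B (T(j := A))"
  unfolding optimal_regime_def
proof (intro conjI allI impI)
  show "regime n B (T(j := A))"
    using opt assms(2-4) regime_fun_upd unfolding optimal_regime_def by blast
  fix T' assume "regime n B T'"
  then have "welfare q B T' \<le> welfare q B T"
    using opt unfolding optimal_regime_def by blast
  also have "\<dots> \<le> welfare q B (T(j := A))"
    using welfare_fun_upd[OF assms(2)] assms(5) by simp
  finally show "welfare q B T' \<le> welfare q B (T(j := A))" .
qed

lemma regime_UN_subset: "regime n B T \<Longrightarrow> (\<Union>j<B. T j) \<subseteq> {1..n}"
  unfolding regime_def by blast

lemma card_UN_regime: "regime n B T \<Longrightarrow> card (\<Union>j<B. T j) = (\<Sum>j<B. card (T j))"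
  unfolding regime_def by (intro card_UN_disjoint) (auto intro: finite_subset)

lemma downward_closed_eq_atLeastAtMost:
  fixes S :: "nat set"
  assumes "finite S" "0 \<notin> S" "\<And>x y. y \<in> S \<Longrightarrow> 1 \<le> x \<Longrightarrow> x \<le> y \<Longrightarrow> x \<in> S"
  shows "S = {1..card S}"
proof (cases "S = {}")
  case True
  then show ?thesis by simp
next
  case False
  have "S \<subseteq> {1..Max S}"
    using assms(1,2) by (auto simp: Suc_le_eq intro: gr0I)
  moreover have "{1..Max S} \<subseteq> S"
    using assms(3)[OF Max_in[OF assms(1) False]] by auto
  ultimately have "S = {1..Max S}"
    by blast
  then show ?thesis
    by (metis card_atLeastAtMost diff_Suc_1)
qed

definition tested_sum :: "nat \<Rightarrow> (nat \<Rightarrow> nat set) \<Rightarrow> nat" where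
  "tested_sum B T = \<Sum>(\<Union>j<B. T j)"

lemma least_optimal_regime_tight:
  assumes q_nonneg: "\<And>i. i \<in> {1..n} \<Longrightarrow> 0 \<le> q i"
    and opt: "optimal_regime q n B T"
    and least: "\<And>T'. optimal_regime q n B T' \<Longrightarrow> tested_sum B T \<le> tested_sum B T'"
    and "j < B"
  shows "tight_test q (T j)"
  unfolding tight_test_def
proof (rule ballI, rule ccontr)
  fix x assume x: "x \<in> T j" and not_tight: "\<not> real (card (T j)) - 1 < q x * real (card (T j))"
  have reg: "regime n B T"
    using opt optimal_regime_def by blast
  then have sub: "T j \<subseteq> {1..n}" and disj: "\<forall>i<B. i \<noteq> j \<longrightarrow> T j \<inter> T i = {}"
    using \<open>j < B\<close> unfolding regime_def by auto
  let ?T' = "T(j := T j - {x})"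
  have "test_util q (T j) \<le> test_util q (T j - {x})"
    using sub x not_tight q_nonneg
    by (intro test_util_remove_ge prod_nonneg) (auto intro: finite_subset)
  then have "optimal_regime q n B ?T'"
    using disj sub by (intro optimal_regime_fun_upd[OF opt \<open>j < B\<close>]) auto
  moreover have "tested_sum B ?T' < tested_sum B T"
  proof -
    let ?U = "\<Union>i<B. T i"
    have "(\<Union>i<B. ?T' i) = ?U - {x}"
      using disj x \<open>j < B\<close> by auto
    moreover have "finite ?U" "x \<in> ?U" "1 \<le> x"
      using regime_UN_subset[OF reg] x sub \<open>j < B\<close> by (auto intro: finite_subset)
    ultimately show ?thesis
      by (simp add: tested_sum_def sum.remove)
  qed
  ultimately show False
    using least by fastforce
qed

lemma least_optimal_regime_downward_closed:
  assumes q_nonneg: "\<And>i. i \<in> {1..n} \<Longrightarrow> 0 \<le> q i"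
    and q_antitone: "\<And>i j. i \<in> {1..n} \<Longrightarrow> j \<in> {1..n} \<Longrightarrow> i \<le> j \<Longrightarrow> q j \<le> q i"
    and opt: "optimal_regime q n B T"
    and least: "\<And>T'. optimal_regime q n B T' \<Longrightarrow> tested_sum B T \<le> tested_sum B T'"
    and y: "y \<in> (\<Union>j<B. T j)" and "1 \<le> x" "x \<le> y"
  shows "x \<in> (\<Union>j<B. T j)"
proof (rule ccontr)
  let ?U = "\<Union>i<B. T i"
  assume x_untested: "x \<notin> ?U"
  obtain j where j: "j < B" "y \<in> T j"
    using y by blast
  have reg: "regime n B T"
    using opt optimal_regime_def by blast
  then have sub: "T j \<subseteq> {1..n}" and disj: "\<forall>i<B. i \<noteq> j \<longrightarrow> T j \<inter> T i = {}"
    using j unfolding regime_def by auto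
  have "x \<noteq> y"
    using x_untested y by blast
  then have "x < y" "x \<in> {1..n}" "y \<in> {1..n}"
    using sub j \<open>1 \<le> x\<close> \<open>x \<le> y\<close> by auto
  let ?A = "insert x (T j - {y})"
  let ?T' = "T(j := ?A)"
  have "test_util q (insert y (T j - {y})) \<le> test_util q ?A"
    using sub j x_untested q_nonneg q_antitone[OF \<open>x \<in> {1..n}\<close> \<open>y \<in> {1..n}\<close> \<open>x \<le> y\<close>]
    by (intro test_util_exchange_le prod_nonneg) (auto intro: finite_subset)
  then have "test_util q (T j) \<le> test_util q ?A"
    using insert_Diff[OF j(2)] by simp
  then have "optimal_regime q n B ?T'"
    using disj sub x_untested \<open>x \<in> {1..n}\<close> by (intro optimal_regime_fun_upd[OF opt j(1)]) auto
  moreover have "tested_sum B ?T' < tested_sum B T"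
  proof -
    have "(\<Union>i<B. ?T' i) = insert x (?U - {y})"
      using disj j by auto
    moreover have "finite ?U"
      using regime_UN_subset[OF reg] by (auto intro: finite_subset)
    ultimately show ?thesis
      using y x_untested \<open>x < y\<close> by (simp add: tested_sum_def sum.remove)
  qed
  ultimately show False
    using least by fastforce
qed

lemma optimal_regime_tight_initial_segment:
  assumes "\<And>i. i \<in> {1..n} \<Longrightarrow> 0 \<le> q i"
    and "\<And>i j. i \<in> {1..n} \<Longrightarrow> j \<in> {1..n} \<Longrightarrow> i \<le> j \<Longrightarrow> q j \<le> q i"
  obtains T where "optimal_regime q n B T" "\<forall>j<B. tight_test q (T j)"
    "(\<Union>j<B. T j) = {1..card (\<Union>j<B. T j)}"
proof -
  obtain T where opt: "optimal_regime q n B T"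
    and least: "\<And>T'. optimal_regime q n B T' \<Longrightarrow> tested_sum B T \<le> tested_sum B T'"
    using ex_has_least_nat[of "optimal_regime q n B" _ "tested_sum B"] optimal_regime_exists by metis
  have "regime n B T"
    using opt optimal_regime_def by blast
  then have "(\<Union>j<B. T j) \<subseteq> {1..n}"
    by (rule regime_UN_subset)
  then have "(\<Union>j<B. T j) = {1..card (\<Union>j<B. T j)}"
    using least_optimal_regime_downward_closed[OF assms opt least]
    by (intro downward_closed_eq_atLeastAtMost) (auto intro: finite_subset)
  then show ?thesis
    using that opt least_optimal_regime_tight[OF assms(1) opt least] by blast
qed

theorem mainTheorem12:
  fixes q :: "nat \<Rightarrow> real" and n B n' :: nat
  assumes "\<And>i. i \<in> {1..n} \<Longrightarrow> 0 \<le> q i \<and> q i \<le> 1"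
    and "\<And>i j. i \<in> {1..n} \<Longrightarrow> j \<in> {1..n} \<Longrightarrow> i \<le> j \<Longrightarrow> q j \<le> q i"
    and "(\<Union>j<B. var_greedy q n B j) = {1..n'}"
  shows "\<exists>T n''. regime n B T \<and> (\<forall>T'. regime n B T' \<longrightarrow> welfare q B T' \<le> welfare q B T)
           \<and> (\<Union>j<B. T j) = {1..n''} \<and> n'' \<le> n'"
proof -
  let ?p = "greedy_start q n"
  have q_nonneg: "\<And>i. i \<in> {1..n} \<Longrightarrow> 0 \<le> q i"
    using assms(1) by blast
  obtain T where opt: "optimal_regime q n B T" and tight: "\<forall>j<B. tight_test q (T j)"
    and init: "(\<Union>j<B. T j) = {1..card (\<Union>j<B. T j)}"
    using optimal_regime_tight_initial_segment[of n q B] q_nonneg assms(2) by blast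
  have reg: "regime n B T"
    using opt optimal_regime_def by blast
  have "{1..n'} = {1..<?p B}"
    using assms(3) UN_var_greedy by simp
  then have n': "n' = ?p B - 1"
    by (metis card_atLeastAtMost card_atLeastLessThan diff_Suc_1)
  have "card (\<Union>j<B. T j) = (\<Sum>j<B. card (T j))"
    using card_UN_regime[OF reg] .
  also have "\<dots> \<le> ?p B - 1"
  proof (rule sum_card_tight_tests_le[where p = ?p and n = n])
    show "q x * (real (?p (Suc l) - ?p l) + 1) < real (?p (Suc l) - ?p l)"
      if "x \<in> {1..n}" "?p (Suc l) \<le> x" for l x
      using greedy_start_rejects[of n q] q_nonneg assms(2) that by blast
  qed (use greedy_start_le_Suc tight reg in \<open>auto simp: regime_def\<close>)
  finally show ?thesis
    using opt init n' unfolding optimal_regime_def by blast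
qed

end
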